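(* Let $m,n\ge1$ and $\rho\in\mathfrak D(\mathcal H^{(m)}\otimes\mathcal H^{(n)})$. Then $$\mathtt p\big(\mathtt{AND}^{(m,n)}(\rho)\big)\le \mathtt p\big(Red^{(1)}_{[m,n]}(\rho)\big)\quad\text{and}\quad \mathtt p\big(\mathtt{AND}^{(m,n)}(\rho)\big)\le \mathtt p\big(Red^{(2)}_{[m,n]}(\rho)\big).$$
   Context: For $n\ge1$, $\mathcal H^{(n)}=(\mathbb C^2)^{\otimes n}$ with canonical basis $|x_1,\dots,x_n\rangle$, $x_i\in\{0,1\}$, $|0\rangle=(1,0)$, $|1\rangle=(0,1)$; $\mathcal H^{(m)}\otimes\mathcal H^{(n)}=\mathcal H^{(m+n)}$. $\mathfrak D(\mathcal H^{(n)})$ is the set of density operators on $\mathcal H^{(n)}$. $P_1^{(n)}$ (resp. $P_0^{(n)}$) is the projection onto the span of canonical basis vectors with last bit $x_n=1$ (resp. $0$), and $\mathtt p(\rho)=\mathrm{tr}(P_1^{(n)}\rho)$ for $\rho\in\mathfrak D(\mathcal H^{(n)})$. $Red^{(1)}_{[m,n]}(\rho)$ and $Red^{(2)}_{[m,n]}(\rho)$ are the reduced states (partial traces) of $\rho$ on the first factor $\mathcal H^{(m)}$ and on the second factor $\mathcal H^{(n)}$ respectively. The Toffoli gate $\mathtt T^{(m,n,1)}$ on $\mathcal H^{(m+n+1)}$ acts by $|x_1,\dots,x_m,y_1,\dots,y_n,z\rangle\mapsto|x_1,\dots,x_m,y_1,\dots,y_n\rangle\otimes|x_my_n\oplus z\rangle$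 ($\oplus$ = addition mod 2), and $\mathtt{AND}^{(m,n)}(\rho)=\mathtt T^{(m,n,1)}(\rho\otimes P_0^{(1)})\mathtt T^{(m,n,1)\dagger}$. *)

theory Defs
  imports Complex_Main "Jordan_Normal_Form.Matrix"
begin

(* Canonical basis vector |x_1,...,x_n> of H^(n) = (C^2)^{\<otimes>n} is indexed by
   the natural number with binary digits x_1 ... x_n (x_1 most significant).
   Hence H^(m) \<otimes> H^(n) = H^(m+n) corresponds to index (i,k) \<mapsto> i*2^n + k,
   and the last bit x_n is the index mod 2. *)

definition mtrace :: "complex mat \<Rightarrow> complex" where
  "mtrace A = (\<Sum>i<dim_row A. A $$ (i,i))"

definition cadj :: "complex mat \<Rightarrow> complex mat" where
  "cadj A = mat (dim_col A) (dim_row A) (\<lambda>(i,j). cnj (A $$ (j,i)))"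

definition density :: "nat \<Rightarrow> complex mat \<Rightarrow> bool" where
  "density n \<rho> \<longleftrightarrow> \<rho> \<in> carrier_mat (2^n) (2^n) \<and> cadj \<rho> = \<rho> \<and>
     (\<forall>v :: nat \<Rightarrow> complex.
        let q = (\<Sum>i<2^n. \<Sum>j<2^n. cnj (v i) * \<rho> $$ (i,j) * v j) in Im q = 0 \<and> Re q \<ge> 0) \<and>
     mtrace \<rho> = 1"

definition P1 :: "nat \<Rightarrow> complex mat" where
  "P1 n = mat (2^n) (2^n) (\<lambda>(i,j). if i = j \<and> odd i then 1 else 0)"

definition P0 :: "nat \<Rightarrow> complex mat" where
  "P0 n = mat (2^n) (2^n) (\<lambda>(i,j). if i = j \<and> even i then 1 else 0)"

definition prob1 :: "nat \<Rightarrow> complex mat \<Rightarrow> real" where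
  "prob1 n \<rho> = Re (mtrace (P1 n * \<rho>))"

definition tensor :: "nat \<Rightarrow> nat \<Rightarrow> complex mat \<Rightarrow> complex mat \<Rightarrow> complex mat" where
  "tensor a b A B = mat (2^(a+b)) (2^(a+b))
     (\<lambda>(i,j). A $$ (i div 2^b, j div 2^b) * B $$ (i mod 2^b, j mod 2^b))"

definition Red1 :: "nat \<Rightarrow> nat \<Rightarrow> complex mat \<Rightarrow> complex mat" where
  "Red1 m n \<rho> = mat (2^m) (2^m) (\<lambda>(i,j). \<Sum>k<2^n. \<rho> $$ (i * 2^n + k, j * 2^n + k))"

definition Red2 :: "nat \<Rightarrow> nat \<Rightarrow> complex mat \<Rightarrow> complex mat" where
  "Red2 m n \<rho> = mat (2^n) (2^n) (\<lambda>(i,j). \<Sum>k<2^m. \<rho> $$ (k * 2^n + i, k * 2^n + j))"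

(* action of the Toffoli gate T^(m,n,1) on basis indices of H^(m+n+1):
   index = (ix * 2^n + iy) * 2 + z; x_m = ix mod 2, y_n = iy mod 2 *)
definition toffoli_idx :: "nat \<Rightarrow> nat \<Rightarrow> nat \<Rightarrow> nat" where
  "toffoli_idx m n t =
     (let z = t mod 2; iy = (t div 2) mod 2^n; ix = t div 2^(n+1);
          z' = (if odd ix \<and> odd iy then 1 - z else z)
      in (ix * 2^n + iy) * 2 + z')"

definition toffoli :: "nat \<Rightarrow> nat \<Rightarrow> complex mat" where
  "toffoli m n = mat (2^(m+n+1)) (2^(m+n+1))
     (\<lambda>(i,j). if i = toffoli_idx m n j then 1 else 0)"

definition AND_gate :: "nat \<Rightarrow> nat \<Rightarrow> complex mat \<Rightarrow> complex mat" where
  "AND_gate m n \<rho> = toffoli m n * tensor (m+n) 1 \<rho> (P0 1) * cadj (toffoli m n)"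

end

theory Submission
  imports Defs
begin

text \<open>All three probabilities are sums of diagonal entries \<open>\<rho>\<^sub>s\<^sub>s\<close> of \<open>\<rho>\<close>, which are
  nonnegative. Since the Toffoli gate only permutes basis vectors, the output bit of
  \<open>AND(\<rho>)\<close> is \<open>1\<close> exactly on the basis states \<open>s\<close> with \<open>x\<^sub>m = y\<^sub>n = 1\<close>, so
  \<open>p(AND(\<rho>))\<close> sums \<open>\<rho>\<^sub>s\<^sub>s\<close> over these \<open>s\<close>; \<open>p(Red\<^sub>1(\<rho>))\<close> and \<open>p(Red\<^sub>2(\<rho>))\<close> sum the
  same entries over the larger sets \<open>x\<^sub>m = 1\<close> and \<open>y\<^sub>n = 1\<close> respectively.\<close>

lemma sum_lessThan_mult:
  "(\<Sum>t<a * b. f t) = (\<Sum>i<a. \<Sum>k<b. f (i * b + k))" for a b :: nat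
proof (induction a)
  case (Suc a)
  have "(\<Sum>t<c + d. f t) = (\<Sum>t<c. f t) + (\<Sum>k<d. f (c + k))" for c d :: nat
    by (induction d) (auto simp: add.assoc)
  from this[of "a * b" b] Suc show ?case by (simp add: add.commute)
qed simp

lemma index_mult_mat_sum:
  assumes "A \<in> carrier_mat nr K" "B \<in> carrier_mat K nc" "i < nr" "j < nc"
  shows "(A * B) $$ (i,j) = (\<Sum>k<K. A $$ (i,k) * B $$ (k,j))"
  using assms by (auto simp: scalar_prod_def atLeast0LessThan intro!: sum.cong)

lemma density_diag_nonneg:
  assumes "density k \<rho>" "t < 2^k"
  shows "Re (\<rho> $$ (t,t)) \<ge> 0"
proof -
  define v :: "nat \<Rightarrow> complex" where "v i = (if i = t then 1 else 0)" for i
  have "cnj (v i) * \<rho> $$ (i,j) * v j = (if j = t then if i = t then \<rho> $$ (t,t) else 0 else 0)"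
    for i j by (simp add: v_def)
  then have "(\<Sum>i<(2::nat)^k. \<Sum>j<(2::nat)^k. cnj (v i) * \<rho> $$ (i,j) * v j) = \<rho> $$ (t,t)"
    using assms(2) by simp
  moreover have "let q = (\<Sum>i<(2::nat)^k. \<Sum>j<(2::nat)^k. cnj (v i) * \<rho> $$ (i,j) * v j)
    in Im q = 0 \<and> Re q \<ge> 0"
    using assms(1) unfolding density_def by blast
  ultimately show ?thesis by (simp add: Let_def)
qed

lemma prob1_eq_sum_diag:
  assumes "R \<in> carrier_mat (2^k) (2^k)"
  shows "prob1 k R = (\<Sum>i<2^k. if odd i then Re (R $$ (i,i)) else 0)"
proof -
  have P1: "P1 k \<in> carrier_mat (2^k) (2^k)" unfolding P1_def by simp
  have "(P1 k * R) $$ (i,i) = (if odd i then R $$ (i,i) else 0)" if "i < 2^k" for i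
  proof -
    have "(P1 k * R) $$ (i,i) = (\<Sum>l<2^k. P1 k $$ (i,l) * R $$ (l,i))"
      using index_mult_mat_sum[OF P1 assms that that] .
    also have "\<dots> = (\<Sum>l<2^k. if l = i then (if odd i then R $$ (l,i) else 0) else 0)"
      using that by (intro sum.cong refl) (auto simp: P1_def)
    finally show ?thesis using that by simp
  qed
  then show ?thesis
    using P1 by (auto simp: prob1_def mtrace_def Re_sum intro!: sum.cong)
qed

lemma diag_conj_index_map:
  assumes T: "T \<in> carrier_mat N N" and A: "A \<in> carrier_mat N N" and "i < N"
    and T_entry: "\<And>i j. i < N \<Longrightarrow> j < N \<Longrightarrow> T $$ (i,j) = (if i = \<tau> j then 1 else 0)"
  shows "(T * A * cadj T) $$ (i,i) = (\<Sum>j<N. \<Sum>k<N. if \<tau> j = i \<and> \<tau> k = i then A $$ (j,k) else 0)"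
proof -
  have cT: "cadj T \<in> carrier_mat N N" and TA: "T * A \<in> carrier_mat N N"
    using T A by (auto simp: cadj_def)
  have "(T * A * cadj T) $$ (i,i) = (\<Sum>k<N. (T * A) $$ (i,k) * cadj T $$ (k,i))"
    using index_mult_mat_sum[OF TA cT \<open>i < N\<close> \<open>i < N\<close>] .
  also have "\<dots> = (\<Sum>k<N. (\<Sum>j<N. T $$ (i,j) * A $$ (j,k)) * cnj (T $$ (i,k)))"
    using \<open>i < N\<close> T by (intro sum.cong refl) (auto simp: index_mult_mat_sum[OF T A] cadj_def)
  also have "\<dots> = (\<Sum>j<N. \<Sum>k<N. if \<tau> j = i \<and> \<tau> k = i then A $$ (j,k) else 0)"
    using \<open>i < N\<close> by (subst sum.swap) (auto simp: T_entry sum_distrib_right intro!: sum.cong)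
  finally show ?thesis .
qed

lemma tensor_P0_entry:
  assumes "j < 2^(a+1)" "k < 2^(a+1)"
  shows "tensor a 1 \<rho> (P0 1) $$ (j,k) = (if even j \<and> even k then \<rho> $$ (j div 2, k div 2) else 0)"
  using assms by (auto simp: tensor_def P0_def even_iff_mod_2_eq_zero)

lemma toffoli_idx_even:
  "toffoli_idx m n (s * 2) = s * 2 + (if odd (s div 2^n) \<and> odd (s mod 2^n) then 1 else 0)"
proof -
  have "s div 2^n * 2^n * 2 + s mod 2^n * 2 = s * 2"
    by (metis distrib_right div_mult_mod_eq)
  then show ?thesis by (simp add: toffoli_idx_def Let_def div_mult2_eq)
qed

lemma toffoli_idx_even_eq_odd:
  "toffoli_idx m n (j * 2) = s * 2 + 1 \<longleftrightarrow> j = s \<and> odd (s div 2^n) \<and> odd (s mod 2^n)"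
proof -
  have "j * 2 \<noteq> s * 2 + 1" by presburger
  then show ?thesis unfolding toffoli_idx_even by auto
qed

lemma AND_gate_carrier: "AND_gate m n \<rho> \<in> carrier_mat (2^(m+n+1)) (2^(m+n+1))"
proof -
  let ?N = "2^(m+n+1) :: nat"
  have "toffoli m n \<in> carrier_mat ?N ?N" "cadj (toffoli m n) \<in> carrier_mat ?N ?N"
    "tensor (m+n) 1 \<rho> (P0 1) \<in> carrier_mat ?N ?N"
    by (simp_all add: toffoli_def cadj_def tensor_def)
  then show ?thesis unfolding AND_gate_def by (metis mult_carrier_mat)
qed

lemma AND_gate_diag_odd:
  assumes "\<rho> \<in> carrier_mat (2^(m+n)) (2^(m+n))" "s < 2^(m+n)"
  shows "AND_gate m n \<rho> $$ (s*2+1, s*2+1)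
    = (if odd (s div 2^n) \<and> odd (s mod 2^n) then \<rho> $$ (s,s) else 0)"
proof -
  define N where "N = (2::nat)^(m+n+1)"
  define A where "A = tensor (m+n) 1 \<rho> (P0 1)"
  let ?\<tau> = "toffoli_idx m n" and ?c = "odd (s div 2^n) \<and> odd (s mod 2^n)"
  have T: "toffoli m n \<in> carrier_mat N N" and A: "A \<in> carrier_mat N N"
    by (simp_all add: N_def toffoli_def A_def tensor_def)
  have i: "s*2+1 < N" using assms(2) by (simp add: N_def)
  \<comment> \<open>\<open>A\<close> vanishes off even indices, and the only even index sent to \<open>s*2+1\<close> is \<open>s*2\<close>, when \<open>?c\<close>.\<close>
  have summand: "(if ?\<tau> j = s*2+1 \<and> ?\<tau> k = s*2+1 then A $$ (j,k) else 0)
      = (if k = s*2 then if j = s*2 then if ?c then \<rho> $$ (s,s) else 0 else 0 else 0)"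
    if "j < N" "k < N" for j k
  proof (cases "even j \<and> even k")
    case True
    then obtain j' k' where jk: "j = j'*2" "k = k'*2" by (metis evenE mult.commute)
    have "A $$ (j,k) = \<rho> $$ (j',k')"
      using tensor_P0_entry[of j "m+n" k] that jk by (simp add: A_def N_def)
    then show ?thesis using toffoli_idx_even_eq_odd jk by auto
  next
    case False
    then have "A $$ (j,k) = 0"
      using tensor_P0_entry[of j "m+n" k] that by (auto simp: A_def N_def)
    with False show ?thesis by auto
  qed
  have "AND_gate m n \<rho> $$ (s*2+1, s*2+1)
      = (\<Sum>j<N. \<Sum>k<N. if ?\<tau> j = s*2+1 \<and> ?\<tau> k = s*2+1 then A $$ (j,k) else 0)"
    unfolding AND_gate_def A_def[symmetric]
    by (rule diag_conj_index_map[OF T A i]) (simp add: N_def toffoli_def)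
  also have "\<dots> = (\<Sum>j<N. \<Sum>k<N. if k = s*2 then if j = s*2 then if ?c then \<rho> $$ (s,s) else 0 else 0 else 0)"
    by (intro sum.cong refl summand) simp_all
  finally show ?thesis using i by simp
qed

lemma prob1_AND_gate:
  assumes "\<rho> \<in> carrier_mat (2^(m+n)) (2^(m+n))"
  shows "prob1 (m+n+1) (AND_gate m n \<rho>)
    = (\<Sum>s<2^(m+n). if odd (s div 2^n) \<and> odd (s mod 2^n) then Re (\<rho> $$ (s,s)) else 0)"
proof -
  let ?X = "AND_gate m n \<rho>"
  have "prob1 (m+n+1) ?X = (\<Sum>t<2^(m+n) * 2. if odd t then Re (?X $$ (t,t)) else 0)"
    using prob1_eq_sum_diag[OF AND_gate_carrier] by (simp add: mult.commute)
  also have "\<dots> = (\<Sum>s<2^(m+n). Re (?X $$ (s*2+1, s*2+1)))"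
  proof -
    have "(\<Sum>b<2. g b) = g 0 + g 1" for g :: "nat \<Rightarrow> real"
      by (simp add: numeral_2_eq_2)
    then show ?thesis unfolding sum_lessThan_mult by simp
  qed
  also have "\<dots> = (\<Sum>s<2^(m+n). if odd (s div 2^n) \<and> odd (s mod 2^n) then Re (\<rho> $$ (s,s)) else 0)"
    using AND_gate_diag_odd[OF assms] by (intro sum.cong) auto
  finally show ?thesis .
qed

lemma prob1_Red1:
  assumes "\<rho> \<in> carrier_mat (2^(m+n)) (2^(m+n))"
  shows "prob1 m (Red1 m n \<rho>) = (\<Sum>s<2^(m+n). if odd (s div 2^n) then Re (\<rho> $$ (s,s)) else 0)"
proof -
  have "prob1 m (Red1 m n \<rho>) = (\<Sum>i<2^m. if odd i then Re (Red1 m n \<rho> $$ (i,i)) else 0)"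
    by (rule prob1_eq_sum_diag) (simp add: Red1_def)
  also have "\<dots> = (\<Sum>i<2^m. \<Sum>k<2^n. if odd ((i * 2^n + k) div 2^n) then Re (\<rho> $$ (i * 2^n + k, i * 2^n + k)) else 0)"
    by (auto simp: Red1_def Re_sum intro!: sum.cong)
  finally show ?thesis by (simp add: power_add sum_lessThan_mult)
qed

lemma prob1_Red2:
  assumes "\<rho> \<in> carrier_mat (2^(m+n)) (2^(m+n))"
  shows "prob1 n (Red2 m n \<rho>) = (\<Sum>s<2^(m+n). if odd (s mod 2^n) then Re (\<rho> $$ (s,s)) else 0)"
proof -
  have "prob1 n (Red2 m n \<rho>) = (\<Sum>i<2^n. if odd i then Re (Red2 m n \<rho> $$ (i,i)) else 0)"
    by (rule prob1_eq_sum_diag) (simp add: Red2_def)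
  also have "\<dots> = (\<Sum>i<2^n. \<Sum>k<2^m. if odd ((k * 2^n + i) mod 2^n) then Re (\<rho> $$ (k * 2^n + i, k * 2^n + i)) else 0)"
    by (auto simp: Red2_def Re_sum intro!: sum.cong)
  also have "\<dots> = (\<Sum>k<2^m. \<Sum>i<2^n. if odd ((k * 2^n + i) mod 2^n) then Re (\<rho> $$ (k * 2^n + i, k * 2^n + i)) else 0)"
    by (rule sum.swap)
  finally show ?thesis by (simp add: power_add sum_lessThan_mult)
qed

theorem theorem3p10:
  fixes m n :: nat and \<rho> :: "complex mat"
  assumes "m \<ge> 1" and "n \<ge> 1" and "density (m+n) \<rho>"
  shows "prob1 (m+n+1) (AND_gate m n \<rho>) \<le> prob1 m (Red1 m n \<rho>) \<and>
         prob1 (m+n+1) (AND_gate m n \<rho>) \<le> prob1 n (Red2 m n \<rho>)"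
proof -
  have \<rho>: "\<rho> \<in> carrier_mat (2^(m+n)) (2^(m+n))"
    using assms(3) by (simp add: density_def)
  have "Re (\<rho> $$ (s,s)) \<ge> 0" if "s < 2^(m+n)" for s
    using density_diag_nonneg[OF assms(3) that] .
  then show ?thesis
    unfolding prob1_AND_gate[OF \<rho>] prob1_Red1[OF \<rho>] prob1_Red2[OF \<rho>]
    by (intro conjI sum_mono) auto
qed

end
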